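(* Let $M\ge 2$ be an integer, $\kappa\ge 0$, $\beta>0$, $\phi\in[0,2\pi]$ and $\bm{\psi}=(\psi_1,\dots,\psi_{M-1})\in[0,2\pi]^{M-1}$ be fixed (deterministic), and let $\mathbf{R}\in\mathbb{R}^{M\times M}$ be a real symmetric positive semidefinite matrix with $R_{\scriptscriptstyle\sum}:=\mathbf{1}^T\mathbf{R}\,\mathbf{1}>0$. For $t\in\{1,\dots,M-1\}$ put $\Phi_t=-t\pi\sin\phi$, and define the vectors $\bm{\omega}_x,\bm{\omega}_y\in\mathbb{R}^M$ by $$\bm{\omega}_{x}=\big[1,\ \cos(\Phi_1+\psi_1)-\sin(\Phi_1+\psi_1),\ \dots,\ \cos(\Phi_{M-1}+\psi_{M-1})-\sin(\Phi_{M-1}+\psi_{M-1})\big]^T,$$ $$\bm{\omega}_{y}=\big[1,\ \cos(\Phi_1+\psi_1)+\sin(\Phi_1+\psi_1),\ \dots,\ \cos(\Phi_{M-1}+\psi_{M-1})+\sin(\Phi_{M-1}+\psi_{M-1})\big]^T.$$ Let $\mathbf{h}_x,\mathbf{h}_y$ be independent real Gaussian random vectors with $\mathbf{h}_x\sim\mathcal{N}\big(\sqrt{\tfrac{\kappa}{2(\kappa+1)}}\,\bm{\omega}_x,\ \tfrac{1}{2(\kappa+1)}\mathbf{R}\big)$ and $\mathbf{h}_y\sim\mathcal{N}\big(\sqrt{\tfrac{\kappa}{2(\kappa+1)}}\,\bm{\omega}_y,\ \tfrac{1}{2(\kappa+1)}\mathbf{R}\big)$, and let $\mathbf{h}^*=\mathbf{h}_x+\mathbbm{i}\,\mathbf{h}_y\in\mathbb{C}^M$.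 Define the random variable $$\xi^{\mathrm{rf}}_{\mathrm{aa-ss}}=\frac{\beta}{M}\big|\mathbf{1}^T\mathbf{h}^*\big|^2 .$$ Then $$\xi^{\mathrm{rf}}_{\mathrm{aa-ss}}\sim \frac{\beta R_{\scriptscriptstyle\sum}}{2(\kappa+1)M}\,\chi^2\Big(2,\ \frac{2\kappa f(\bm{\psi},\phi)}{R_{\scriptscriptstyle\sum}}\Big),$$ where $f(\bm{\psi},\phi)=\upsilon_1(\bm{\psi},\phi)^2+\upsilon_2(\bm{\psi},\phi)^2$ with $$\upsilon_1(\bm{\psi},\phi)=1+\sum_{t=1}^{M-1}\cos(\psi_t+\Phi_t),\qquad \upsilon_2(\bm{\psi},\phi)=\sum_{t=1}^{M-1}\sin(\psi_t+\Phi_t).$$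
   Context: $\mathbf{1}$ denotes the all-ones vector of length $M$ and $\mathbbm{i}=\sqrt{-1}$. $\mathcal{N}(\bm{\mu},\mathbf{C})$ denotes a real Gaussian random vector with mean $\bm{\mu}$ and covariance matrix $\mathbf{C}$. $\chi^2(m,n)$ denotes a non-central chi-squared random variable with $m$ degrees of freedom and non-centrality parameter $n$ (i.e. the distribution of $\sum_{k=1}^m Z_k^2$ with $Z_k$ independent, $Z_k\sim\mathcal{N}(\mu_k,1)$ and $\sum_k\mu_k^2=n$), and $X\sim c\,\chi^2(m,n)$ means $X$ has the distribution of $c$ times such a variable. Interpretation (not needed for the statement): $\mathbf{h}^*$ is the phase-adjusted Rician-fading channel vector from an $M$-antenna power beacon (half-wavelength uniform linear array, azimuth angle $\phi$, preventive phase shifts $\psi_t$, Rician factor $\kappa$, spatial correlation $\mathbf{R}$) to a single-antenna receiver, and $\xi^{\mathrm{rf}}_{\mathrm{aa-ss}}$ is the incident RF power when all antennas transmit the same signal with equal power $\beta/M$. *)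

theory Defs
  imports "HOL-Probability.Probability"
begin

definition normal_measure :: "real \<Rightarrow> real \<Rightarrow> real measure" where
  "normal_measure m v =
     (if v = 0 then return borel m else density lborel (normal_density m (sqrt v)))"

definition gaussian_vec ::
  "'a measure \<Rightarrow> nat \<Rightarrow> (nat \<Rightarrow> 'a \<Rightarrow> real) \<Rightarrow> (nat \<Rightarrow> real) \<Rightarrow> (nat \<Rightarrow> nat \<Rightarrow> real) \<Rightarrow> bool" where
  "gaussian_vec P n X mu C \<longleftrightarrow>
     (\<forall>i<n. X i \<in> borel_measurable P) \<and>
     (\<forall>a :: nat \<Rightarrow> real.
        distr P borel (\<lambda>\<omega>. \<Sum>i<n. a i * X i \<omega>) =
        normal_measure (\<Sum>i<n. a i * mu i) (\<Sum>i<n. \<Sum>j<n. a i * C i j * a j))"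

text \<open>Non-central chi-squared distribution chi2(m, nc): law of sum_{k<m} Z_k^2 with
  Z_k independent, Z_k ~ N(mu_k, 1), sum mu_k^2 = nc; we take mu = (sqrt nc, 0, ..., 0)
  (the law depends only on nc).\<close>
definition noncentral_chi2 :: "nat \<Rightarrow> real \<Rightarrow> real measure" where
  "noncentral_chi2 m nc =
     distr (PiM {..<m} (\<lambda>k. normal_measure (if k = 0 then sqrt nc else 0) 1)) borel
       (\<lambda>z. \<Sum>k<m. (z k)\<^sup>2)"

definition scaled_chi2_distributed ::
  "'a measure \<Rightarrow> ('a \<Rightarrow> real) \<Rightarrow> real \<Rightarrow> nat \<Rightarrow> real \<Rightarrow> bool" where
  "scaled_chi2_distributed P X c m nc \<longleftrightarrow>
     X \<in> borel_measurable P \<and>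
     distr P borel X = distr (noncentral_chi2 m nc) borel (\<lambda>x. c * x)"

end

theory Submission
  imports Defs
begin

(* Put V = 1^T C 1 for the common covariance C of hx and hy and w = 1 / sqrt V.  The normalised
   sums Zx = w 1^T hx and Zy = w 1^T hy are independent N(mx, 1) and N(my, 1) variables, and
   |1^T h*|^2 = V (Zx^2 + Zy^2).  The law of Zx^2 + Zy^2 depends on the mean (mx, my) only through
   mx^2 + my^2: rotating the mean rotates the product density, and Lebesgue measure on the plane
   is rotation invariant (a rotation is a product of three shears, each of which preserves
   Lebesgue measure by Fubini and translation invariance).  For the mean (sqrt (mx^2 + my^2), 0)
   the law is chi2(2, mx^2 + my^2) by definition.  Finally 1^T omega_x = v1 - v2 and
   1^T omega_y = v1 + v2, whence mx^2 + my^2 = 2 kappa (v1^2 + v2^2) / R_sum. *)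

lemma sets_borel_real_pair [measurable_cong]:
  "sets (borel :: (real \<times> real) measure) = sets (borel \<Otimes>\<^sub>M borel)"
  by (simp only: borel_prod)

lemma emeasure_distr_eq_nn_integral:
  assumes "g \<in> measurable N K" "A \<in> sets K"
  shows "emeasure (distr N K g) A = (\<integral>\<^sup>+x. indicator A (g x) \<partial>N)"
proof -
  have "emeasure (distr N K g) A = (\<integral>\<^sup>+y. indicator A y \<partial>distr N K g)"
    using assms(2) by simp
  also have "\<dots> = (\<integral>\<^sup>+x. indicator A (g x) \<partial>N)"
    using assms by (intro nn_integral_distr) auto
  finally show ?thesis .
qed

lemma distr_PiM_pair:
  assumes "product_sigma_finite M" "x \<noteq> y" and [measurable]: "case_prod f \<in> measurable (M x \<Otimes>\<^sub>M M y) N"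
  shows "distr (PiM {x, y} M) N (\<lambda>\<sigma>. f (\<sigma> x) (\<sigma> y)) = distr (M x \<Otimes>\<^sub>M M y) N (case_prod f)"
proof (rule measure_eqI)
  interpret product_sigma_finite M by fact
  have [measurable]: "(\<lambda>\<sigma>. f (\<sigma> x) (\<sigma> y)) \<in> measurable (PiM {x, y} M) N"
    using measurable_compose[OF measurable_Pair[OF measurable_component_singleton[of x]
        measurable_component_singleton[of y]] assms(3)]
    by simp
  fix A assume "A \<in> sets (distr (PiM {x, y} M) N (\<lambda>\<sigma>. f (\<sigma> x) (\<sigma> y)))"
  then have [measurable]: "A \<in> sets N" by simp
  have "emeasure (distr (PiM {x, y} M) N (\<lambda>\<sigma>. f (\<sigma> x) (\<sigma> y))) A
      = (\<integral>\<^sup>+\<sigma>. indicator A (f (\<sigma> x) (\<sigma> y)) \<partial>PiM {x, y} M)"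
    by (rule emeasure_distr_eq_nn_integral) measurable
  also have "\<dots> = (\<integral>\<^sup>+z. indicator A (f (fst z) (snd z)) \<partial>(M x \<Otimes>\<^sub>M M y))"
    using \<open>x \<noteq> y\<close> by (subst product_nn_integral_pair[where f = "\<lambda>u v. indicator A (f u v)"]) auto
  also have "\<dots> = emeasure (distr (M x \<Otimes>\<^sub>M M y) N (case_prod f)) A"
    by (subst emeasure_distr_eq_nn_integral) (auto simp: case_prod_beta')
  finally show "emeasure (distr (PiM {x, y} M) N (\<lambda>\<sigma>. f (\<sigma> x) (\<sigma> y))) A
      = emeasure (distr (M x \<Otimes>\<^sub>M M y) N (case_prod f)) A" .
qed simp

section \<open>Rotation invariance of Lebesgue measure on the plane\<close>

lemma nn_integral_lborel_shift:
  fixes f :: "real \<Rightarrow> ennreal"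
  assumes "f \<in> borel_measurable borel"
  shows "(\<integral>\<^sup>+x. f (x + a) \<partial>lborel) = (\<integral>\<^sup>+x. f x \<partial>lborel)"
  using nn_integral_real_affine[OF assms, of 1 a] by (simp add: add.commute)

lemma nn_integral_lborel_shear_fst:
  fixes H :: "real \<times> real \<Rightarrow> ennreal"
  assumes [measurable]: "H \<in> borel_measurable borel"
  shows "(\<integral>\<^sup>+p. H (fst p + t * snd p, snd p) \<partial>lborel) = (\<integral>\<^sup>+p. H p \<partial>lborel)"
proof -
  have "(\<integral>\<^sup>+p. H (fst p + t * snd p, snd p) \<partial>lborel)
      = (\<integral>\<^sup>+y. \<integral>\<^sup>+x. H (x + t * y, y) \<partial>lborel \<partial>lborel)"
    unfolding lborel_prod[symmetric] by (subst lborel_pair.nn_integral_snd[symmetric]) auto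
  also have "\<dots> = (\<integral>\<^sup>+y. \<integral>\<^sup>+x. H (x, y) \<partial>lborel \<partial>lborel)"
  proof (rule nn_integral_cong)
    fix y
    show "(\<integral>\<^sup>+x. H (x + t * y, y) \<partial>lborel) = (\<integral>\<^sup>+x. H (x, y) \<partial>lborel)"
      by (rule nn_integral_lborel_shift[of "\<lambda>x. H (x, y)"]) measurable
  qed
  also have "\<dots> = (\<integral>\<^sup>+p. H p \<partial>lborel)"
    unfolding lborel_prod[symmetric] by (subst lborel_pair.nn_integral_snd[symmetric]) auto
  finally show ?thesis .
qed

lemma nn_integral_lborel_shear_snd:
  fixes H :: "real \<times> real \<Rightarrow> ennreal"
  assumes [measurable]: "H \<in> borel_measurable borel"
  shows "(\<integral>\<^sup>+p. H (fst p, snd p + t * fst p) \<partial>lborel) = (\<integral>\<^sup>+p. H p \<partial>lborel)"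
proof -
  have "(\<integral>\<^sup>+p. H (fst p, snd p + t * fst p) \<partial>lborel)
      = (\<integral>\<^sup>+x. \<integral>\<^sup>+y. H (x, y + t * x) \<partial>lborel \<partial>lborel)"
    unfolding lborel_prod[symmetric] by (subst lborel.nn_integral_fst[symmetric]) auto
  also have "\<dots> = (\<integral>\<^sup>+x. \<integral>\<^sup>+y. H (x, y) \<partial>lborel \<partial>lborel)"
  proof (rule nn_integral_cong)
    fix x
    show "(\<integral>\<^sup>+y. H (x, y + t * x) \<partial>lborel) = (\<integral>\<^sup>+y. H (x, y) \<partial>lborel)"
      by (rule nn_integral_lborel_shift[of "\<lambda>y. H (x, y)"]) measurable
  qed
  also have "\<dots> = (\<integral>\<^sup>+p. H p \<partial>lborel)"
    unfolding lborel_prod[symmetric] by (subst lborel.nn_integral_fst[symmetric]) auto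
  finally show ?thesis .
qed

lemma nn_integral_lborel_rotation_sin_nonzero:
  fixes H :: "real \<times> real \<Rightarrow> ennreal"
  assumes [measurable]: "H \<in> borel_measurable borel" and "c\<^sup>2 + s\<^sup>2 = 1" and "s \<noteq> 0"
  shows "(\<integral>\<^sup>+p. H (c * fst p - s * snd p, s * fst p + c * snd p) \<partial>lborel) = (\<integral>\<^sup>+p. H p \<partial>lborel)"
proof -
  \<comment> \<open>Paeth's factorisation of the rotation by \<open>\<theta>\<close> (\<open>c = cos \<theta>\<close>, \<open>s = sin \<theta>\<close>) into three shears;
    here \<open>t = - tan (\<theta> / 2)\<close>.\<close>
  define t where "t = (c - 1) / s"
  have "t * s = c - 1"
    using \<open>s \<noteq> 0\<close> by (simp add: t_def)
  then have "s * (c * x - s * y) = s * (x + t * y + t * (y + s * (x + t * y)))"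
      and "s * x + c * y = y + s * (x + t * y)" for x y
    using \<open>c\<^sup>2 + s\<^sup>2 = 1\<close> by algebra+
  then have rotation_eq_shears: "(c * x - s * y, s * x + c * y)
      = (x + t * y + t * (y + s * (x + t * y)), y + s * (x + t * y))" for x y
    using \<open>s \<noteq> 0\<close> by simp
  define H1 where "H1 p = H (fst p + t * snd p, snd p)" for p
  define H2 where "H2 p = H1 (fst p, snd p + s * fst p)" for p
  have [measurable]: "H1 \<in> borel_measurable borel" "H2 \<in> borel_measurable borel"
    unfolding H1_def H2_def by measurable
  have "(\<integral>\<^sup>+p. H (c * fst p - s * snd p, s * fst p + c * snd p) \<partial>lborel)
      = (\<integral>\<^sup>+p. H2 (fst p + t * snd p, snd p) \<partial>lborel)"
    by (simp add: rotation_eq_shears H1_def H2_def)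
  also have "\<dots> = (\<integral>\<^sup>+p. H2 p \<partial>lborel)"
    by (rule nn_integral_lborel_shear_fst) measurable
  also have "\<dots> = (\<integral>\<^sup>+p. H1 p \<partial>lborel)"
    unfolding H2_def by (rule nn_integral_lborel_shear_snd) measurable
  also have "\<dots> = (\<integral>\<^sup>+p. H p \<partial>lborel)"
    unfolding H1_def by (rule nn_integral_lborel_shear_fst) measurable
  finally show ?thesis .
qed

lemma nn_integral_lborel_rotation:
  fixes H :: "real \<times> real \<Rightarrow> ennreal"
  assumes [measurable]: "H \<in> borel_measurable borel" and "c\<^sup>2 + s\<^sup>2 = 1"
  shows "(\<integral>\<^sup>+p. H (c * fst p - s * snd p, s * fst p + c * snd p) \<partial>lborel) = (\<integral>\<^sup>+p. H p \<partial>lborel)"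
proof (cases "s = 0")
  case False
  with assms show ?thesis by (rule nn_integral_lborel_rotation_sin_nonzero)
next
  case True
  with \<open>c\<^sup>2 + s\<^sup>2 = 1\<close> consider "c = 1" | "c = -1"
    by (auto simp: power2_eq_1_iff)
  then show ?thesis
  proof cases
    case 1
    with True show ?thesis by simp
  next
    case 2
    \<comment> \<open>The half-turn is the square of the quarter-turn.\<close>
    define H' where "H' p = H (- snd p, fst p)" for p
    have [measurable]: "H' \<in> borel_measurable borel"
      unfolding H'_def by measurable
    have "(\<integral>\<^sup>+p. H (- fst p, - snd p) \<partial>lborel) = (\<integral>\<^sup>+p. H' (- snd p, fst p) \<partial>lborel)"
      by (simp add: H'_def)
    also have "\<dots> = (\<integral>\<^sup>+p. H' p \<partial>lborel)"
      using nn_integral_lborel_rotation_sin_nonzero[of H' 0 1] by simp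
    also have "\<dots> = (\<integral>\<^sup>+p. H p \<partial>lborel)"
      using nn_integral_lborel_rotation_sin_nonzero[of H 0 1] by (simp add: H'_def)
    finally show ?thesis
      using True 2 by simp
  qed
qed

section \<open>Squared norm of a unit-variance normal vector in the plane\<close>

lemma sets_normal_measure [simp, measurable_cong]: "sets (normal_measure m v) = sets borel"
  by (simp add: normal_measure_def)

lemma prob_space_normal_measure: "0 \<le> v \<Longrightarrow> prob_space (normal_measure m v)"
  by (auto simp: normal_measure_def prob_space_return prob_space_normal_density)

lemma normal_measure_unit_variance:
  "normal_measure m 1 = density lborel (\<lambda>x. ennreal (normal_density m 1 x))"
  by (simp add: normal_measure_def)

lemma pair_normal_measure_unit_variance:
  "normal_measure a 1 \<Otimes>\<^sub>M normal_measure b 1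
     = density lborel (\<lambda>z. ennreal (normal_density a 1 (fst z) * normal_density b 1 (snd z)))"
proof -
  have "normal_measure a 1 \<Otimes>\<^sub>M normal_measure b 1 = density (lborel \<Otimes>\<^sub>M lborel)
      (\<lambda>(x, y). ennreal (normal_density a 1 x) * ennreal (normal_density b 1 y))"
    unfolding normal_measure_unit_variance
  proof (rule pair_measure_density)
    show "sigma_finite_measure (density lborel (\<lambda>x. ennreal (normal_density b 1 x)))"
      using prob_space_normal_measure[of 1 b]
      by (simp add: normal_measure_unit_variance prob_space_imp_sigma_finite)
  qed (auto intro: lborel.sigma_finite_measure_axioms)
  also have "\<dots> = density lborel
      (\<lambda>z. ennreal (normal_density a 1 (fst z) * normal_density b 1 (snd z)))"
    unfolding lborel_prod
    by (intro density_cong) (auto simp: ennreal_mult' normal_density_nonneg split: prod.splits)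
  finally show ?thesis .
qed

lemma normal_density_rotation:
  assumes "c\<^sup>2 + s\<^sup>2 = 1"
  shows "normal_density (c * r) 1 (c * x - s * y) * normal_density (s * r) 1 (s * x + c * y)
       = normal_density r 1 x * normal_density 0 1 y"
proof -
  have "(c * x - s * y - c * r)\<^sup>2 + (s * x + c * y - s * r)\<^sup>2 = (c\<^sup>2 + s\<^sup>2) * ((x - r)\<^sup>2 + y\<^sup>2)"
    by (simp add: power2_eq_square algebra_simps)
  with assms have "exp (- (c * x - s * y - c * r)\<^sup>2 / 2) * exp (- (s * x + c * y - s * r)\<^sup>2 / 2)
      = exp (- (x - r)\<^sup>2 / 2) * exp (- y\<^sup>2 / 2)"
    by (simp add: exp_add[symmetric] add_divide_distrib[symmetric])
  then show ?thesis
    by (simp add: normal_density_def)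
qed

lemma distr_sum_sq_pair_normal_rotation:
  assumes "c\<^sup>2 + s\<^sup>2 = 1"
  shows "distr (normal_measure (c * r) 1 \<Otimes>\<^sub>M normal_measure (s * r) 1) borel (\<lambda>z. (fst z)\<^sup>2 + (snd z)\<^sup>2)
       = distr (normal_measure r 1 \<Otimes>\<^sub>M normal_measure 0 1) borel (\<lambda>z. (fst z)\<^sup>2 + (snd z)\<^sup>2)"
    (is "distr ?N1 borel ?q = distr ?N2 borel ?q")
proof (rule measure_eqI)
  fix A assume "A \<in> sets (distr ?N1 borel ?q)"
  then have [measurable]: "A \<in> sets borel" by simp
  let ?f = "\<lambda>a b z. ennreal (normal_density a 1 (fst z) * normal_density b 1 (snd z)) * indicator A (?q z)"
  have [measurable]: "?f a b \<in> borel_measurable borel" for a b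
    by measurable
  have emeasure_eq: "emeasure (distr (normal_measure a 1 \<Otimes>\<^sub>M normal_measure b 1) borel ?q) A
      = (\<integral>\<^sup>+z. ?f a b z \<partial>lborel)" for a b
  proof -
    have "emeasure (distr (normal_measure a 1 \<Otimes>\<^sub>M normal_measure b 1) borel ?q) A
        = (\<integral>\<^sup>+z. indicator A (?q z) \<partial>(normal_measure a 1 \<Otimes>\<^sub>M normal_measure b 1))"
      by (rule emeasure_distr_eq_nn_integral) measurable
    also have "\<dots> = (\<integral>\<^sup>+z. ?f a b z \<partial>lborel)"
      unfolding pair_normal_measure_unit_variance by (rule nn_integral_density) measurable
    finally show ?thesis .
  qed
  have "(\<integral>\<^sup>+z. ?f (c * r) (s * r) z \<partial>lborel)
      = (\<integral>\<^sup>+p. ?f (c * r) (s * r) (c * fst p - s * snd p, s * fst p + c * snd p) \<partial>lborel)"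
    using nn_integral_lborel_rotation[of "?f (c * r) (s * r)" c s] assms by simp
  also have "\<dots> = (\<integral>\<^sup>+z. ?f r 0 z \<partial>lborel)"
  proof (rule nn_integral_cong)
    fix p :: "real \<times> real"
    obtain x y where p: "p = (x, y)"
      by fastforce
    have "(c * x - s * y)\<^sup>2 + (s * x + c * y)\<^sup>2 = (c\<^sup>2 + s\<^sup>2) * (x\<^sup>2 + y\<^sup>2)"
      by (simp add: power2_eq_square algebra_simps)
    with assms have "(c * x - s * y)\<^sup>2 + (s * x + c * y)\<^sup>2 = x\<^sup>2 + y\<^sup>2"
      by simp
    then show "?f (c * r) (s * r) (c * fst p - s * snd p, s * fst p + c * snd p) = ?f r 0 p"
      unfolding p fst_conv snd_conv normal_density_rotation[OF assms] by (simp only:)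
  qed
  finally show "emeasure (distr ?N1 borel ?q) A = emeasure (distr ?N2 borel ?q) A"
    by (simp only: emeasure_eq)
qed simp

lemma distr_sum_sq_pair_normal_radial:
  "distr (normal_measure a 1 \<Otimes>\<^sub>M normal_measure b 1) borel (\<lambda>z. (fst z)\<^sup>2 + (snd z)\<^sup>2)
   = distr (normal_measure (sqrt (a\<^sup>2 + b\<^sup>2)) 1 \<Otimes>\<^sub>M normal_measure 0 1) borel (\<lambda>z. (fst z)\<^sup>2 + (snd z)\<^sup>2)"
proof (cases "a\<^sup>2 + b\<^sup>2 = 0")
  case True
  then show ?thesis by (simp add: sum_power2_eq_zero_iff)
next
  case False
  define r where "r = sqrt (a\<^sup>2 + b\<^sup>2)"
  have "r > 0" "r\<^sup>2 = a\<^sup>2 + b\<^sup>2"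
    using False by (simp_all add: r_def less_le)
  then have "(a / r)\<^sup>2 + (b / r)\<^sup>2 = 1"
    using False by (simp add: power_divide add_divide_distrib[symmetric])
  from distr_sum_sq_pair_normal_rotation[OF this, of r] show ?thesis
    unfolding r_def[symmetric] using \<open>r > 0\<close> by simp
qed

lemma noncentral_chi2_two:
  "noncentral_chi2 2 nc
   = distr (normal_measure (sqrt nc) 1 \<Otimes>\<^sub>M normal_measure 0 1) borel (\<lambda>z. (fst z)\<^sup>2 + (snd z)\<^sup>2)"
proof -
  define N where "N = (\<lambda>k::nat. normal_measure (if k = 0 then sqrt nc else 0) 1)"
  have "product_sigma_finite N"
    by (simp add: N_def product_sigma_finite_def prob_space_imp_sigma_finite prob_space_normal_measure)
  have [measurable_cong]: "sets (N k) = sets borel" for k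
    by (simp add: N_def)
  have "{..<2::nat} = {0, 1}" by auto
  then have "noncentral_chi2 2 nc = distr (PiM {0, 1} N) borel (\<lambda>\<sigma>. (\<sigma> 0)\<^sup>2 + (\<sigma> 1)\<^sup>2)"
    by (simp add: noncentral_chi2_def N_def)
  also have "\<dots> = distr (N 0 \<Otimes>\<^sub>M N 1) borel (\<lambda>(u, v). u\<^sup>2 + v\<^sup>2)"
    by (rule distr_PiM_pair[where M = N and x = 0 and y = 1 and f = "\<lambda>u v. u\<^sup>2 + v\<^sup>2"])
      (fact, simp, measurable)
  finally have "noncentral_chi2 2 nc = distr (N 0 \<Otimes>\<^sub>M N 1) borel (\<lambda>(u, v). u\<^sup>2 + v\<^sup>2)" .
  moreover have "N 0 = normal_measure (sqrt nc) 1" "N 1 = normal_measure 0 1"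
    by (simp_all add: N_def)
  ultimately show ?thesis
    by (simp only: case_prod_beta')
qed

lemma distr_sum_sq_pair_normal_eq_noncentral_chi2:
  "distr (normal_measure a 1 \<Otimes>\<^sub>M normal_measure b 1) borel (\<lambda>z. (fst z)\<^sup>2 + (snd z)\<^sup>2)
   = noncentral_chi2 2 (a\<^sup>2 + b\<^sup>2)"
  unfolding noncentral_chi2_two by (rule distr_sum_sq_pair_normal_radial)

section \<open>Gaussian vectors\<close>

lemma scaled_chi2_distributedI:
  assumes [measurable]: "Y \<in> borel_measurable P" and "distr P borel Y = noncentral_chi2 m nc"
  shows "scaled_chi2_distributed P (\<lambda>\<omega>. c * Y \<omega>) c m nc"
proof -
  have "distr P borel (\<lambda>\<omega>. c * Y \<omega>) = distr (distr P borel Y) borel (\<lambda>x. c * x)"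
    by (subst distr_distr) (auto simp: comp_def)
  with assms show ?thesis
    by (simp add: scaled_chi2_distributed_def)
qed

lemma (in prob_space) indep_normal_sum_sq_noncentral_chi2:
  assumes "indep_var borel X borel Y"
    and "distr M borel X = normal_measure a 1" and "distr M borel Y = normal_measure b 1"
  shows "distr M borel (\<lambda>\<omega>. (X \<omega>)\<^sup>2 + (Y \<omega>)\<^sup>2) = noncentral_chi2 2 (a\<^sup>2 + b\<^sup>2)"
proof -
  have [measurable]: "X \<in> borel_measurable M" "Y \<in> borel_measurable M"
    using indep_var_rv1[OF assms(1)] indep_var_rv2[OF assms(1)] by simp_all
  have "distr M borel (\<lambda>\<omega>. (X \<omega>)\<^sup>2 + (Y \<omega>)\<^sup>2)
      = distr (distr M (borel \<Otimes>\<^sub>M borel) (\<lambda>\<omega>. (X \<omega>, Y \<omega>))) borel (\<lambda>z. (fst z)\<^sup>2 + (snd z)\<^sup>2)"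
    by (subst distr_distr) (auto simp: comp_def)
  also have "distr M (borel \<Otimes>\<^sub>M borel) (\<lambda>\<omega>. (X \<omega>, Y \<omega>)) = normal_measure a 1 \<Otimes>\<^sub>M normal_measure b 1"
    using assms by (simp add: indep_var_distribution_eq)
  finally show ?thesis
    by (simp add: distr_sum_sq_pair_normal_eq_noncentral_chi2)
qed

lemma (in prob_space) indep_var_linear_combinations:
  fixes X Y :: "nat \<Rightarrow> 'a \<Rightarrow> real"
  assumes "indep_var
      (PiM {..<n} (\<lambda>_. borel)) (\<lambda>\<omega>. \<lambda>i\<in>{..<n}. X i \<omega>) (PiM {..<n} (\<lambda>_. borel)) (\<lambda>\<omega>. \<lambda>i\<in>{..<n}. Y i \<omega>)"
  shows "indep_var borel (\<lambda>\<omega>. \<Sum>i<n. a i * X i \<omega>) borel (\<lambda>\<omega>. \<Sum>i<n. b i * Y i \<omega>)"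
proof -
  have "(\<lambda>f. \<Sum>i<n. c i * f i) \<in> borel_measurable (PiM {..<n} (\<lambda>_. borel))" for c :: "nat \<Rightarrow> real"
    by measurable
  then have "indep_var borel ((\<lambda>f. \<Sum>i<n. a i * f i) \<circ> (\<lambda>\<omega>. \<lambda>i\<in>{..<n}. X i \<omega>))
      borel ((\<lambda>f. \<Sum>i<n. b i * f i) \<circ> (\<lambda>\<omega>. \<lambda>i\<in>{..<n}. Y i \<omega>))"
    by (intro indep_var_compose[OF assms])
  then show ?thesis
    by (simp add: comp_def)
qed

lemma gaussian_vec_measurable:
  "gaussian_vec P n X mu C \<Longrightarrow> i < n \<Longrightarrow> X i \<in> borel_measurable P"
  by (simp add: gaussian_vec_def)

lemma gaussian_vec_unit_variance_sum:
  assumes "gaussian_vec P n X mu C" and "w\<^sup>2 * (\<Sum>i<n. \<Sum>j<n. C i j) = 1"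
  shows "distr P borel (\<lambda>\<omega>. \<Sum>i<n. w * X i \<omega>) = normal_measure (\<Sum>i<n. w * mu i) 1"
proof -
  have "distr P borel (\<lambda>\<omega>. \<Sum>i<n. w * X i \<omega>)
      = normal_measure (\<Sum>i<n. w * mu i) (\<Sum>i<n. \<Sum>j<n. w * C i j * w)"
    using assms(1) unfolding gaussian_vec_def by (elim conjE allE[where x = "\<lambda>_. w"])
  moreover have "(\<Sum>i<n. \<Sum>j<n. w * C i j * w) = 1"
    using assms(2) by (simp add: sum_distrib_left power2_eq_square algebra_simps)
  ultimately show ?thesis
    by simp
qed

lemma gaussian_vec_pair_sum_sq_scaled_chi2:
  assumes "prob_space P"
    and X: "gaussian_vec P n X mx C" and Y: "gaussian_vec P n Y my C"
    and indep: "prob_space.indep_var P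
      (PiM {..<n} (\<lambda>_. borel)) (\<lambda>\<omega>. \<lambda>i\<in>{..<n}. X i \<omega>) (PiM {..<n} (\<lambda>_. borel)) (\<lambda>\<omega>. \<lambda>i\<in>{..<n}. Y i \<omega>)"
    and "(\<Sum>i<n. \<Sum>j<n. C i j) > 0"
  shows "scaled_chi2_distributed P (\<lambda>\<omega>. k * ((\<Sum>i<n. X i \<omega>)\<^sup>2 + (\<Sum>i<n. Y i \<omega>)\<^sup>2))
      (k * (\<Sum>i<n. \<Sum>j<n. C i j)) 2 (((\<Sum>i<n. mx i)\<^sup>2 + (\<Sum>i<n. my i)\<^sup>2) / (\<Sum>i<n. \<Sum>j<n. C i j))"
proof -
  interpret prob_space P by fact
  define V where "V = (\<Sum>i<n. \<Sum>j<n. C i j)"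
  define w where "w = 1 / sqrt V"
  have "w\<^sup>2 = 1 / V" "w\<^sup>2 * V = 1"
    using assms(5) by (simp_all add: V_def w_def power_divide)
  have [measurable]: "X i \<in> borel_measurable P" "Y i \<in> borel_measurable P" if "i < n" for i
    using gaussian_vec_measurable[OF X that] gaussian_vec_measurable[OF Y that] .
  have "distr P borel (\<lambda>\<omega>. \<Sum>i<n. w * X i \<omega>) = normal_measure (\<Sum>i<n. w * mx i) 1"
    and "distr P borel (\<lambda>\<omega>. \<Sum>i<n. w * Y i \<omega>) = normal_measure (\<Sum>i<n. w * my i) 1"
    using \<open>w\<^sup>2 * V = 1\<close> unfolding V_def
    by (simp_all add: gaussian_vec_unit_variance_sum[OF X] gaussian_vec_unit_variance_sum[OF Y])
  with indep_var_linear_combinations[OF indep]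
  have "distr P borel (\<lambda>\<omega>. (\<Sum>i<n. w * X i \<omega>)\<^sup>2 + (\<Sum>i<n. w * Y i \<omega>)\<^sup>2)
      = noncentral_chi2 2 ((\<Sum>i<n. w * mx i)\<^sup>2 + (\<Sum>i<n. w * my i)\<^sup>2)"
    by (rule indep_normal_sum_sq_noncentral_chi2)
  also have "(\<Sum>i<n. w * mx i)\<^sup>2 + (\<Sum>i<n. w * my i)\<^sup>2 = ((\<Sum>i<n. mx i)\<^sup>2 + (\<Sum>i<n. my i)\<^sup>2) / V"
    by (simp add: sum_distrib_left[symmetric] power_mult_distrib \<open>w\<^sup>2 = 1 / V\<close> add_divide_distrib)
  finally have "scaled_chi2_distributed P
      (\<lambda>\<omega>. k * V * ((\<Sum>i<n. w * X i \<omega>)\<^sup>2 + (\<Sum>i<n. w * Y i \<omega>)\<^sup>2))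
      (k * V) 2 (((\<Sum>i<n. mx i)\<^sup>2 + (\<Sum>i<n. my i)\<^sup>2) / V)"
    by (intro scaled_chi2_distributedI) measurable
  moreover have "k * V * ((\<Sum>i<n. w * X i \<omega>)\<^sup>2 + (\<Sum>i<n. w * Y i \<omega>)\<^sup>2)
      = k * ((\<Sum>i<n. X i \<omega>)\<^sup>2 + (\<Sum>i<n. Y i \<omega>)\<^sup>2)" for \<omega>
  proof -
    have "k * V * ((\<Sum>i<n. w * X i \<omega>)\<^sup>2 + (\<Sum>i<n. w * Y i \<omega>)\<^sup>2)
        = k * (w\<^sup>2 * V) * ((\<Sum>i<n. X i \<omega>)\<^sup>2 + (\<Sum>i<n. Y i \<omega>)\<^sup>2)"
      by (simp add: sum_distrib_left[symmetric] power_mult_distrib algebra_simps)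
    with \<open>w\<^sup>2 * V = 1\<close> show ?thesis
      by simp
  qed
  ultimately show ?thesis
    unfolding V_def by simp
qed

lemma sum_lessThan_if_zero:
  "1 \<le> (n::nat) \<Longrightarrow> (\<Sum>i<n. if i = 0 then a else f i) = a + (\<Sum>i\<in>{1..n-1}. f i)"
proof -
  assume "1 \<le> n"
  then obtain m where "n = Suc m"
    by (cases n) auto
  then show ?thesis
    using sum.atLeast1_atMost_eq[of f m] by (simp del: sum.lessThan_Suc add: sum.lessThan_Suc_shift)
qed

lemma cmod_sum_Complex_power2:
  "(cmod (\<Sum>i\<in>A. Complex (f i) (g i)))\<^sup>2 = (\<Sum>i\<in>A. f i)\<^sup>2 + (\<Sum>i\<in>A. g i)\<^sup>2"
  by (simp add: cmod_power2 Re_sum Im_sum)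

lemma rician_noncentrality:
  fixes \<kappa> RS u v :: real
  assumes "\<kappa> \<ge> 0" and "RS > 0"
  shows "((sqrt (\<kappa> / (2 * (\<kappa> + 1))) * (u - v))\<^sup>2 + (sqrt (\<kappa> / (2 * (\<kappa> + 1))) * (u + v))\<^sup>2)
      / (RS / (2 * (\<kappa> + 1))) = 2 * \<kappa> * (u\<^sup>2 + v\<^sup>2) / RS"
proof -
  define a d where "a = sqrt (\<kappa> / (2 * (\<kappa> + 1)))" and "d = 2 * (\<kappa> + 1)"
  have "d > 0" "a\<^sup>2 * d = \<kappa>"
    using assms(1) by (simp_all add: a_def d_def)
  have "((a * (u - v))\<^sup>2 + (a * (u + v))\<^sup>2) / (RS / d) = 2 * (a\<^sup>2 * d) * (u\<^sup>2 + v\<^sup>2) / RS"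
    using \<open>d > 0\<close> \<open>RS > 0\<close> by (simp add: field_simps power2_eq_square)
  also have "\<dots> = 2 * \<kappa> * (u\<^sup>2 + v\<^sup>2) / RS"
    by (simp only: \<open>a\<^sup>2 * d = \<kappa>\<close>)
  finally show ?thesis
    unfolding a_def d_def .
qed

theorem theorem1:
  fixes P :: "'a measure"
    and M :: nat
    and \<kappa> \<beta> \<phi> :: real
    and \<psi> :: "nat \<Rightarrow> real"
    and R :: "nat \<Rightarrow> nat \<Rightarrow> real"
    and hx hy :: "nat \<Rightarrow> 'a \<Rightarrow> real"
  assumes "prob_space P"
    and "M \<ge> 2"
    and "\<kappa> \<ge> 0"
    and "\<beta> > 0"
    and "0 \<le> \<phi>" and "\<phi> \<le> 2 * pi"
    and "\<forall>t\<in>{1..M-1}. 0 \<le> \<psi> t \<and> \<psi> t \<le> 2 * pi"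
    and "\<forall>i<M. \<forall>j<M. R i j = R j i"
    and "\<forall>v :: nat \<Rightarrow> real. (\<Sum>i<M. \<Sum>j<M. v i * R i j * v j) \<ge> 0"
    and "(\<Sum>i<M. \<Sum>j<M. R i j) > 0"
    and "gaussian_vec P M hx
           (\<lambda>i. sqrt (\<kappa> / (2 * (\<kappa> + 1))) *
              (if i = 0 then 1
               else cos (- real i * pi * sin \<phi> + \<psi> i) - sin (- real i * pi * sin \<phi> + \<psi> i)))
           (\<lambda>i j. R i j / (2 * (\<kappa> + 1)))"
    and "gaussian_vec P M hy
           (\<lambda>i. sqrt (\<kappa> / (2 * (\<kappa> + 1))) *
              (if i = 0 then 1
               else cos (- real i * pi * sin \<phi> + \<psi> i) + sin (- real i * pi * sin \<phi> + \<psi> i)))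
           (\<lambda>i j. R i j / (2 * (\<kappa> + 1)))"
    and "prob_space.indep_var P
           (PiM {..<M} (\<lambda>_. borel)) (\<lambda>\<omega>. \<lambda>i\<in>{..<M}. hx i \<omega>)
           (PiM {..<M} (\<lambda>_. borel)) (\<lambda>\<omega>. \<lambda>i\<in>{..<M}. hy i \<omega>)"
  shows "scaled_chi2_distributed P
           (\<lambda>\<omega>. \<beta> / real M * (cmod (\<Sum>i<M. Complex (hx i \<omega>) (hy i \<omega>)))\<^sup>2)
           (\<beta> * (\<Sum>i<M. \<Sum>j<M. R i j) / (2 * (\<kappa> + 1) * real M))
           2
           (2 * \<kappa> *
              ((1 + (\<Sum>t\<in>{1..M-1}. cos (\<psi> t + (- real t * pi * sin \<phi>))))\<^sup>2
               + (\<Sum>t\<in>{1..M-1}. sin (\<psi> t + (- real t * pi * sin \<phi>)))\<^sup>2)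
            / (\<Sum>i<M. \<Sum>j<M. R i j))"
proof -
  define \<upsilon>\<^sub>1 where "\<upsilon>\<^sub>1 = 1 + (\<Sum>t\<in>{1..M-1}. cos (\<psi> t + (- real t * pi * sin \<phi>)))"
  define \<upsilon>\<^sub>2 where "\<upsilon>\<^sub>2 = (\<Sum>t\<in>{1..M-1}. sin (\<psi> t + (- real t * pi * sin \<phi>)))"
  define RS where "RS = (\<Sum>i<M. \<Sum>j<M. R i j)"
  let ?a = "sqrt (\<kappa> / (2 * (\<kappa> + 1)))"
  have "\<kappa> + 1 > 0" "RS > 0"
    using assms(3,10) by (simp_all add: RS_def)
  have variance: "(\<Sum>i<M. \<Sum>j<M. R i j / (2 * (\<kappa> + 1))) = RS / (2 * (\<kappa> + 1))"
    by (simp add: RS_def sum_divide_distrib)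
  have mean_x: "(\<Sum>i<M. ?a * (if i = 0 then 1
      else cos (- real i * pi * sin \<phi> + \<psi> i) - sin (- real i * pi * sin \<phi> + \<psi> i))) = ?a * (\<upsilon>\<^sub>1 - \<upsilon>\<^sub>2)"
    and mean_y: "(\<Sum>i<M. ?a * (if i = 0 then 1
      else cos (- real i * pi * sin \<phi> + \<psi> i) + sin (- real i * pi * sin \<phi> + \<psi> i))) = ?a * (\<upsilon>\<^sub>1 + \<upsilon>\<^sub>2)"
    using assms(2)
    by (simp_all add: sum_distrib_left[symmetric] sum_lessThan_if_zero sum_subtractf sum.distrib
        \<upsilon>\<^sub>1_def \<upsilon>\<^sub>2_def add.commute)
  have "(\<Sum>i<M. \<Sum>j<M. R i j / (2 * (\<kappa> + 1))) > 0"
    unfolding variance using \<open>\<kappa> + 1 > 0\<close> \<open>RS > 0\<close> by simp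
  moreover have "\<beta> / real M * (RS / (2 * (\<kappa> + 1))) = \<beta> * RS / (2 * (\<kappa> + 1) * real M)"
    by simp
  ultimately have "scaled_chi2_distributed P (\<lambda>\<omega>. \<beta> / real M * ((\<Sum>i<M. hx i \<omega>)\<^sup>2 + (\<Sum>i<M. hy i \<omega>)\<^sup>2))
      (\<beta> * RS / (2 * (\<kappa> + 1) * real M)) 2 (2 * \<kappa> * (\<upsilon>\<^sub>1\<^sup>2 + \<upsilon>\<^sub>2\<^sup>2) / RS)"
    using gaussian_vec_pair_sum_sq_scaled_chi2[OF assms(1,11,12,13), of "\<beta> / real M"]
    by (simp only: variance mean_x mean_y rician_noncentrality[OF assms(3) \<open>RS > 0\<close>])
  then show ?thesis
    unfolding cmod_sum_Complex_power2 RS_def \<upsilon>\<^sub>1_def \<upsilon>\<^sub>2_def .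
qed

end
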